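(* Assume $t_m=1$. Then every maximal left special factor of $u_\beta$ contains at least one non-zero letter.
   Context: $\beta>1$ is a simple Parry number with $d_\beta(1)=t_1\cdots t_{m-1}t_m$, $m\ge2$, nonnegative integer digits, $t_1\ge1$, satisfying the Parry condition ($t_i\cdots t_m0^\omega$ lexicographically strictly smaller than $t_1\cdots t_m0^\omega$ for $2\le i\le m$). $\varphi$ is the substitution on $\mathcal A=\{0,\dots,m-1\}$ with $\varphi(k)=0^{t_{k+1}}(k+1)$ for $0\le k\le m-2$, $\varphi(m-1)=0^{t_m}$, and $u_\beta=\lim_n\varphi^n(0)$ is its fixed point. A factor $w$ is left special if at least two distinct letters $a$ make $aw$ a factor of $u_\beta$; a left special factor $w$ is maximal if for no letter $a$ is $wa$ left special. *)

theory Defs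
  imports Main
begin

text \<open>Digits d_beta(1) = t_1 ... t_m are stored as a list t with t ! (i-1) = t_i,
  so m = length t. The letters of the alphabet {0,...,m-1} are natural numbers.\<close>

definition digit_seq :: "nat list \<Rightarrow> nat \<Rightarrow> nat" where
  "digit_seq t n = (if n < length t then t ! n else 0)"

definition lex_less :: "(nat \<Rightarrow> nat) \<Rightarrow> (nat \<Rightarrow> nat) \<Rightarrow> bool" where
  "lex_less x y \<longleftrightarrow> (\<exists>k. (\<forall>j<k. x j = y j) \<and> x k < y k)"

text \<open>Parry condition: t_i...t_m 0^omega <_lex t_1...t_m 0^omega for 2 <= i <= m.\<close>
definition parry_cond :: "nat list \<Rightarrow> bool" where
  "parry_cond t \<longleftrightarrow> (\<forall>i. 1 \<le> i \<and> i < length t \<longrightarrow>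
      lex_less (\<lambda>n. digit_seq t (i + n)) (digit_seq t))"

definition simple_parry_digits :: "nat list \<Rightarrow> bool" where
  "simple_parry_digits t \<longleftrightarrow> length t \<ge> 2 \<and> t ! 0 \<ge> 1 \<and> parry_cond t"

definition phi :: "nat list \<Rightarrow> nat \<Rightarrow> nat list" where
  "phi t k = (if k + 1 < length t then replicate (t ! k) 0 @ [k + 1]
              else replicate (t ! (length t - 1)) 0)"

definition phi_word :: "nat list \<Rightarrow> nat list \<Rightarrow> nat list" where
  "phi_word t w = concat (map (phi t) w)"

text \<open>The fixed point u_beta = lim_n phi^n(0): its i-th letter is the letter eventually
  found at position i of phi^n(0).\<close>
definition u_beta :: "nat list \<Rightarrow> nat \<Rightarrow> nat" where
  "u_beta t i = (THE a. \<exists>N. \<forall>n\<ge>N. i < length ((phi_word t ^^ n) [0]) \<and>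
                                   ((phi_word t ^^ n) [0]) ! i = a)"

definition is_factor :: "(nat \<Rightarrow> nat) \<Rightarrow> nat list \<Rightarrow> bool" where
  "is_factor u w \<longleftrightarrow> (\<exists>i. \<forall>j<length w. u (i + j) = w ! j)"

definition left_special :: "(nat \<Rightarrow> nat) \<Rightarrow> nat list \<Rightarrow> bool" where
  "left_special u w \<longleftrightarrow> (\<exists>a b. a \<noteq> b \<and> is_factor u (a # w) \<and> is_factor u (b # w))"

definition maximal_left_special :: "(nat \<Rightarrow> nat) \<Rightarrow> nat list \<Rightarrow> bool" where
  "maximal_left_special u w \<longleftrightarrow> left_special u w \<and> (\<nexists>a. left_special u (w @ [a]))"

end

theory Submission
  imports Defs "HOL-Library.Sublist"
begin

text \<open>Since \<open>t\<^sub>m = 1\<close>, the last letter of \<open>\<phi>(a)\<close> is the cyclic successor \<open>a + 1 mod m\<close>,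
  and in \<open>u\<^sub>\<beta> = \<phi>(u\<^sub>\<beta>)\<close> the image \<open>\<phi>(x)\<close> of an occurrence \<open>yx\<close> is preceded by the last
  letter of \<open>\<phi>(y)\<close>. Following an occurrence of \<open>0\<close> through two generations thus exhibits
  \<open>\<phi>(0) = 0\<^bsup>t\<^sub>1\<^esub>1\<close> preceded by two distinct letters, so every \<open>0\<^sup>k\<close> with \<open>k \<le> t\<^sub>1\<close> has a
  left special right extension, namely a prefix of \<open>\<phi>(0)\<close>. Conversely, the Parry condition
  gives \<open>t\<^sub>i \<le> t\<^sub>1\<close>, so a run of \<open>t\<^sub>1 + 1\<close> zeros can only begin at an image \<open>\<phi>(m-1) = 0\<close>;
  since all occurrences of a nonzero letter are preceded by one and the same letter, \<open>0\<^sup>k\<close>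
  with \<open>k > t\<^sub>1\<close> is not left special.\<close>

lemma phi_word_Nil [simp]: "phi_word t [] = []"
  by (simp add: phi_word_def)

lemma phi_word_Cons [simp]: "phi_word t (a # w) = phi t a @ phi_word t w"
  by (simp add: phi_word_def)

lemma phi_word_append [simp]: "phi_word t (v @ w) = phi_word t v @ phi_word t w"
  by (simp add: phi_word_def)

lemma prefix_phi_word: "prefix v w \<Longrightarrow> prefix (phi_word t v) (phi_word t w)"
  by (auto simp: prefix_def)

lemma digit_le_first_digit:
  assumes "parry_cond t" and "k < length t"
  shows "t ! k \<le> t ! 0"
proof (cases "k = 0")
  case False
  then have "lex_less (\<lambda>n. digit_seq t (k + n)) (digit_seq t)"
    using assms unfolding parry_cond_def by simp
  then obtain j where same: "\<forall>i<j. digit_seq t (k + i) = digit_seq t i"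
    and less: "digit_seq t (k + j) < digit_seq t j"
    unfolding lex_less_def by blast
  have "digit_seq t k \<le> digit_seq t 0"
    using same[rule_format, of 0] less by (cases j) auto
  moreover have "t \<noteq> []"
    using assms(2) by auto
  ultimately show ?thesis
    using assms(2) by (simp add: digit_seq_def)
qed simp

lemma is_factorI: "(\<And>j. j < length w \<Longrightarrow> u (i + j) = w ! j) \<Longrightarrow> is_factor u w"
  unfolding is_factor_def by blast

lemma is_factor_take:
  assumes "is_factor u w"
  shows "is_factor u (take n w)"
proof -
  obtain i where "\<forall>j<length w. u (i + j) = w ! j"
    using assms unfolding is_factor_def by blast
  then show ?thesis
    by (intro is_factorI[of _ _ i]) simp
qed

lemma left_special_take:
  assumes "left_special u w"
  shows "left_special u (take n w)"
proof -
  obtain a b where "a \<noteq> b" "is_factor u (a # w)" "is_factor u (b # w)"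
    using assms unfolding left_special_def by blast
  then show ?thesis
    unfolding left_special_def by (metis is_factor_take take_Suc_Cons)
qed

locale beta_substitution =
  fixes t :: "nat list"
  assumes two_le_length: "2 \<le> length t"
    and first_digit_pos: "1 \<le> t ! 0"
    and last_digit_pos: "1 \<le> t ! (length t - 1)"
begin

lemma phi_nonempty: "phi t k \<noteq> []"
  using last_digit_pos by (auto simp: phi_def)

lemma phi_letters_less: "a \<in> set (phi t k) \<Longrightarrow> a < length t"
  using two_le_length by (auto simp: phi_def split: if_splits)

lemma phi_zero: "phi t 0 = replicate (t ! 0) 0 @ [1]"
  using two_le_length by (simp add: phi_def)

lemma phi_last_letter: "phi t (length t - 1) = replicate (t ! (length t - 1)) 0"
  using two_le_length by (simp add: phi_def)

lemma phi_zero_Cons: "\<exists>v. phi t 0 = 0 # v"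
  using first_digit_pos by (cases "t ! 0") (simp_all add: phi_zero)

lemma length_le_length_phi_word: "length w \<le> length (phi_word t w)"
proof (induction w)
  case (Cons a w)
  have "0 < length (phi t a)"
    using phi_nonempty by simp
  with Cons.IH have "length w < length (phi t a) + length (phi_word t w)"
    by linarith
  then show ?case
    by simp
qed simp

definition phi_iterate :: "nat \<Rightarrow> nat list" where
  "phi_iterate n = (phi_word t ^^ n) [0]"

lemma phi_iterate_Suc: "phi_iterate (Suc n) = phi_word t (phi_iterate n)"
  by (simp add: phi_iterate_def)

lemma prefix_phi_iterate_Suc: "prefix (phi_iterate n) (phi_iterate (Suc n))"
proof (induction n)
  case 0
  obtain v where "phi t 0 = 0 # v"
    using phi_zero_Cons by blast
  then show ?case
    by (simp add: phi_iterate_def)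
next
  case (Suc n)
  then show ?case
    using prefix_phi_word by (simp add: phi_iterate_Suc)
qed

lemma prefix_phi_iterate: "n \<le> n' \<Longrightarrow> prefix (phi_iterate n) (phi_iterate n')"
proof (induction n' rule: dec_induct)
  case (step n')
  then show ?case
    using prefix_order.trans prefix_phi_iterate_Suc by blast
qed simp

lemma less_length_phi_iterate: "n < length (phi_iterate n)"
proof (induction n)
  case 0
  then show ?case by (simp add: phi_iterate_def)
next
  case (Suc n)
  obtain v where v: "phi_iterate n = 0 # v"
    using prefix_phi_iterate[of 0 n] by (auto simp: phi_iterate_def prefix_def)
  have "2 \<le> length (phi t 0)"
    using first_digit_pos by (simp add: phi_zero)
  then have "length (phi_iterate n) < length (phi_iterate (Suc n))"
    using length_le_length_phi_word[of v] by (simp add: phi_iterate_Suc v)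
  then show ?case
    using Suc by simp
qed

lemma phi_iterate_letters_less: "a \<in> set (phi_iterate n) \<Longrightarrow> a < length t"
proof (induction n arbitrary: a)
  case 0
  then show ?case
    using two_le_length by (auto simp: phi_iterate_def)
next
  case (Suc n)
  then show ?case
    using phi_letters_less by (auto simp: phi_iterate_Suc phi_word_def)
qed

lemma u_beta_eq_nth_phi_iterate:
  assumes i: "i < length (phi_iterate n)"
  shows "u_beta t i = phi_iterate n ! i"
proof -
  have stable: "i < length (phi_iterate n') \<and> phi_iterate n' ! i = phi_iterate n ! i"
    if "n \<le> n'" for n'
    using prefix_phi_iterate[OF that] i by (auto simp: prefix_def nth_append)
  show ?thesis
    unfolding u_beta_def phi_iterate_def[symmetric]
  proof (rule the_equality)
    show "\<exists>N. \<forall>n'\<ge>N. i < length (phi_iterate n') \<and> phi_iterate n' ! i = phi_iterate n ! i"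
      using stable by blast
  next
    fix a
    assume "\<exists>N. \<forall>n'\<ge>N. i < length (phi_iterate n') \<and> phi_iterate n' ! i = a"
    then obtain N where "\<forall>n'\<ge>N. phi_iterate n' ! i = a"
      by blast
    then show "a = phi_iterate n ! i"
      using stable[of "max N n"] by simp
  qed
qed

lemma map_u_beta_upt_eq_take:
  "k \<le> length (phi_iterate n) \<Longrightarrow> map (u_beta t) [0..<k] = take k (phi_iterate n)"
  by (simp add: list_eq_iff_nth_eq u_beta_eq_nth_phi_iterate)

lemma u_beta_less_length: "u_beta t i < length t"
  using u_beta_eq_nth_phi_iterate[OF less_length_phi_iterate]
    phi_iterate_letters_less[OF nth_mem[OF less_length_phi_iterate]]
  by metis

lemma u_beta_0 [simp]: "u_beta t 0 = 0"
  using u_beta_eq_nth_phi_iterate[of 0 0] by (simp add: phi_iterate_def)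

text \<open>\<open>block_start q\<close> is the position in \<open>u\<^sub>\<beta> = \<phi>(u\<^sub>\<beta>)\<close> at which the image of the \<open>q\<close>-th letter
  begins.\<close>

definition block_start :: "nat \<Rightarrow> nat" where
  "block_start q = length (phi_word t (map (u_beta t) [0..<q]))"

lemma block_start_0 [simp]: "block_start 0 = 0"
  by (simp add: block_start_def)

lemma block_start_Suc: "block_start (Suc q) = block_start q + length (phi t (u_beta t q))"
  by (simp add: block_start_def)

lemma le_block_start: "q \<le> block_start q"
  unfolding block_start_def using length_le_length_phi_word by (metis diff_zero length_map length_upt)

lemma phi_word_u_beta_prefix:
  "phi_word t (map (u_beta t) [0..<q]) = map (u_beta t) [0..<block_start q]"
proof -
  have "map (u_beta t) [0..<q] = take q (phi_iterate q)"
    using less_length_phi_iterate[of q] by (simp add: map_u_beta_upt_eq_take)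
  then have "prefix (phi_word t (map (u_beta t) [0..<q])) (phi_iterate (Suc q))"
    using prefix_phi_word[OF take_is_prefix] by (simp add: phi_iterate_Suc)
  then have "phi_word t (map (u_beta t) [0..<q]) = take (block_start q) (phi_iterate (Suc q))"
    and "block_start q \<le> length (phi_iterate (Suc q))"
    by (auto simp: block_start_def prefix_def)
  then show ?thesis
    by (simp add: map_u_beta_upt_eq_take)
qed

lemma u_beta_block_start_add:
  assumes "r < length (phi t (u_beta t q))"
  shows "u_beta t (block_start q + r) = phi t (u_beta t q) ! r"
proof -
  have "map (u_beta t) [0..<block_start (Suc q)]
      = map (u_beta t) [0..<block_start q] @ phi t (u_beta t q)"
    by (simp flip: phi_word_u_beta_prefix)
  then have "map (u_beta t) [0..<block_start (Suc q)] ! (block_start q + r)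
      = phi t (u_beta t q) ! r"
    by (simp add: nth_append)
  then show ?thesis
    using assms by (simp add: block_start_Suc)
qed

lemma block_decomposition: "\<exists>q r. r < length (phi t (u_beta t q)) \<and> i = block_start q + r"
proof (induction i)
  case 0
  then show ?case
    using phi_nonempty by (intro exI[of _ 0]) simp
next
  case (Suc i)
  then obtain q r where qr: "r < length (phi t (u_beta t q))" "i = block_start q + r"
    by blast
  show ?case
  proof (cases "Suc r < length (phi t (u_beta t q))")
    case True
    then show ?thesis
      using qr by (intro exI[of _ q] exI[of _ "Suc r"]) simp
  next
    case False
    then have "Suc i = block_start (Suc q) + 0"
      using qr by (simp add: block_start_Suc)
    then show ?thesis
      using phi_nonempty by blast
  qed
qed

lemma u_beta_before_block_start:
  assumes "0 < q"
  shows "u_beta t (block_start q - 1) = last (phi t (u_beta t (q - 1)))"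
proof -
  obtain p where q: "q = Suc p"
    using assms by (cases q) auto
  let ?l = "length (phi t (u_beta t p))"
  have "0 < ?l"
    using phi_nonempty by simp
  then have start: "block_start q - 1 = block_start p + (?l - 1)"
    unfolding q block_start_Suc by linarith
  have "u_beta t (block_start q - 1) = phi t (u_beta t p) ! (?l - 1)"
    unfolding start using \<open>0 < ?l\<close> by (intro u_beta_block_start_add) simp
  also have "\<dots> = last (phi t (u_beta t (q - 1)))"
    using q phi_nonempty by (simp add: last_conv_nth)
  finally show ?thesis .
qed

lemma is_factor_last_phi_Cons_phi:
  assumes "0 < q"
  shows "is_factor (u_beta t) (last (phi t (u_beta t (q - 1))) # phi t (u_beta t q))"
proof (rule is_factorI[where i = "block_start q - 1"])
  let ?w = "last (phi t (u_beta t (q - 1))) # phi t (u_beta t q)"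
  fix j
  assume "j < length ?w"
  moreover have "0 < block_start q"
    using assms le_block_start[of q] by simp
  ultimately show "u_beta t (block_start q - 1 + j) = ?w ! j"
    using u_beta_before_block_start[OF assms] u_beta_block_start_add
    by (cases j) auto
qed

lemma exists_u_beta_eq: "k < length t \<Longrightarrow> \<exists>q. u_beta t q = k"
proof (induction k)
  case 0
  then show ?case
    using u_beta_0 by blast
next
  case (Suc k)
  then obtain q where q: "u_beta t q = k"
    by auto
  then have "u_beta t (block_start q + t ! k) = Suc k"
    using Suc.prems u_beta_block_start_add[of "t ! k" q] by (simp add: phi_def nth_append)
  then show ?case
    by blast
qed

lemma exists_pos_u_beta_zero: "\<exists>p>0. u_beta t p = 0"
proof -
  obtain q where q: "u_beta t q = length t - 1"
    using exists_u_beta_eq two_le_length by fastforce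
  then have "0 < q"
    using two_le_length by (cases q) auto
  moreover have "phi t (u_beta t q) ! 0 = 0"
    unfolding q phi_last_letter using last_digit_pos by simp
  ultimately show ?thesis
    using u_beta_block_start_add[of 0 q] phi_nonempty le_block_start[of q]
    by (metis add_0_right length_greater_0_conv less_le_trans)
qed

lemma u_beta_eq_SucD:
  assumes "u_beta t p = Suc k"
  shows "\<exists>q. u_beta t q = k \<and> p = block_start q + t ! k"
proof -
  obtain q r where r: "r < length (phi t (u_beta t q))" and p: "p = block_start q + r"
    using block_decomposition by blast
  have letter: "phi t (u_beta t q) ! r = Suc k"
    using assms u_beta_block_start_add[OF r] p by simp
  have phi_q: "phi t (u_beta t q) = replicate (t ! u_beta t q) 0 @ [Suc (u_beta t q)]"
  proof (rule ccontr)
    assume "phi t (u_beta t q) \<noteq> replicate (t ! u_beta t q) 0 @ [Suc (u_beta t q)]"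
    then have "phi t (u_beta t q) = replicate (t ! (length t - 1)) 0"
      by (simp add: phi_def split: if_splits)
    then show False
      using letter r by simp
  qed
  have "r = t ! u_beta t q"
    using letter r unfolding phi_q by (auto simp: nth_append split: if_splits)
  moreover have "u_beta t q = k"
    using letter unfolding phi_q calculation by (simp add: nth_append)
  ultimately show ?thesis
    using p by blast
qed

lemma unique_predecessor:
  "0 < k \<Longrightarrow> k < length t \<Longrightarrow> \<exists>c. \<forall>p. u_beta t p = k \<longrightarrow> u_beta t (p - 1) = c"
proof (induction k)
  case 0
  then show ?case by simp
next
  case (Suc k)
  show ?case
  proof (cases "t ! k = 0")
    case False
    have "u_beta t (p - 1) = 0" if p: "u_beta t p = Suc k" for p
    proof -
      obtain q where q: "u_beta t q = k" "p = block_start q + t ! k"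
        using u_beta_eq_SucD[OF p] by blast
      have "p - 1 = block_start q + (t ! k - 1)"
        using q False by simp
      then show ?thesis
        using q False Suc.prems u_beta_block_start_add[of "t ! k - 1" q]
        by (simp add: phi_def nth_append)
    qed
    then show ?thesis
      by blast
  next
    case True
    then have "0 < k"
      using first_digit_pos by (cases k) auto
    then obtain c where c: "\<forall>p. u_beta t p = k \<longrightarrow> u_beta t (p - 1) = c"
      using Suc by auto
    have "u_beta t (p - 1) = last (phi t c)" if p: "u_beta t p = Suc k" for p
    proof -
      obtain q where q: "u_beta t q = k" "p = block_start q"
        using u_beta_eq_SucD[OF p] True by auto
      then show ?thesis
        using \<open>0 < k\<close> c u_beta_before_block_start[of q] by (cases q) auto
    qed
    then show ?thesis
      by blast
  qed
qed

end

locale parry_last_digit_one =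
  fixes t :: "nat list"
  assumes simple_parry: "simple_parry_digits t"
    and last_digit_one: "t ! (length t - 1) = 1"

sublocale parry_last_digit_one \<subseteq> beta_substitution
  using simple_parry last_digit_one by unfold_locales (auto simp: simple_parry_digits_def)

context parry_last_digit_one
begin

lemma last_phi:
  assumes "a < length t"
  shows "last (phi t a) = Suc a mod length t"
proof (cases "Suc a < length t")
  case True
  then show ?thesis
    by (simp add: phi_def)
next
  case False
  then have "Suc a = length t"
    using assms by simp
  then show ?thesis
    using last_digit_one by (simp add: phi_def)
qed

lemma last_phi_neq:
  assumes "a < length t"
  shows "last (phi t a) \<noteq> a"
proof (cases "Suc a < length t")
  case False
  then have "Suc a = length t"
    using assms by simp
  then show ?thesis
    using last_phi[OF assms] two_le_length by auto
qed (simp add: last_phi assms)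

lemma left_special_phi_zero: "left_special (u_beta t) (phi t 0)"
proof -
  obtain p where p: "0 < p" "u_beta t p = 0"
    using exists_pos_u_beta_zero by blast
  define P where "P = block_start p"
  have "0 < P"
    using p le_block_start[of p] by (simp add: P_def)
  moreover have "u_beta t P = 0"
    using p u_beta_block_start_add[of 0 p] phi_zero_Cons by (auto simp: P_def)
  ultimately have "is_factor (u_beta t) (last (phi t (u_beta t (P - 1))) # phi t 0)"
    using is_factor_last_phi_Cons_phi[of P] by simp
  moreover have "is_factor (u_beta t) (u_beta t (P - 1) # phi t 0)"
    using is_factor_last_phi_Cons_phi[of p] p u_beta_before_block_start by (simp add: P_def)
  moreover have "last (phi t (u_beta t (P - 1))) \<noteq> u_beta t (P - 1)"
    using last_phi_neq u_beta_less_length by blast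
  ultimately show ?thesis
    unfolding left_special_def by blast
qed

lemma left_special_zero_run_extension:
  assumes "k \<le> t ! 0"
  shows "left_special (u_beta t) (replicate k 0 @ [phi t 0 ! k])"
proof -
  have "k < length (phi t 0)"
    using assms by (simp add: phi_zero)
  then have "take (Suc k) (phi t 0) = take k (phi t 0) @ [phi t 0 ! k]"
    by (rule take_Suc_conv_app_nth)
  also have "take k (phi t 0) = replicate k 0"
    using assms by (simp add: phi_zero)
  finally show ?thesis
    using left_special_take[OF left_special_phi_zero] by metis
qed

lemma zero_run_starts_block_of_last_letter:
  assumes zeros: "\<forall>s\<le>t ! 0. u_beta t (i + s) = 0"
  shows "\<exists>q. u_beta t q = length t - 1 \<and> i = block_start q"
proof -
  obtain q r where r: "r < length (phi t (u_beta t q))" and i: "i = block_start q + r"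
    using block_decomposition by blast
  let ?x = "u_beta t q"
  have "\<not> ?x + 1 < length t"
  proof
    assume x: "?x + 1 < length t"
    then have "r \<le> t ! ?x" and "t ! ?x \<le> t ! 0"
      using r simple_parry digit_le_first_digit[of t ?x]
      by (auto simp: phi_def simple_parry_digits_def)
    then have "u_beta t (i + (t ! ?x - r)) = 0"
      using zeros[rule_format, of "t ! ?x - r"] by linarith
    moreover have "u_beta t (i + (t ! ?x - r)) = ?x + 1"
      using x i \<open>r \<le> t ! ?x\<close> u_beta_block_start_add[of "t ! ?x" q]
    by (simp add: phi_def nth_append)
    ultimately show False
      by simp
  qed
  then have "?x = length t - 1" and "r = 0"
    using u_beta_less_length[of q] r last_digit_one by (auto simp: phi_def)
  then show ?thesis
    using i by auto
qed

lemma not_left_special_long_zero_run: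
  assumes "t ! 0 < k"
  shows "\<not> left_special (u_beta t) (replicate k 0)"
proof
  have "0 < length t - 1" and "length t - 1 < length t"
    using two_le_length by auto
  then obtain c where c: "\<forall>p. u_beta t p = length t - 1 \<longrightarrow> u_beta t (p - 1) = c"
    using unique_predecessor by blast
  have unique: "a = last (phi t c)" if factor: "is_factor (u_beta t) (a # replicate k 0)" for a
  proof -
    obtain i where i: "\<forall>j<length (a # replicate k 0). u_beta t (i + j) = (a # replicate k 0) ! j"
      using factor unfolding is_factor_def by blast
    have "u_beta t (Suc i + s) = 0" if "s \<le> t ! 0" for s
      using i[rule_format, of "Suc s"] that assms by simp
    then obtain q where q: "u_beta t q = length t - 1" "Suc i = block_start q"
      using zero_run_starts_block_of_last_letter by blast
    then have "0 < q"
      using two_le_length by (cases q) auto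
    then have "u_beta t (block_start q - 1) = last (phi t c)"
      using u_beta_before_block_start[of q] q(1) c by simp
    then have "u_beta t i = last (phi t c)"
      unfolding q(2)[symmetric] by simp
    then show ?thesis
      using i[rule_format, of 0] by simp
  qed
  assume "left_special (u_beta t) (replicate k 0)"
  then show False
    unfolding left_special_def using unique by blast
qed

end

theorem lemma6:
  fixes t :: "nat list"
  assumes "simple_parry_digits t"
    and "t ! (length t - 1) = 1"
    and "maximal_left_special (u_beta t) w"
  shows "\<exists>j<length w. w ! j \<noteq> 0"
proof (rule ccontr)
  interpret parry_last_digit_one t
    using assms(1,2) by unfold_locales
  assume "\<not> (\<exists>j<length w. w ! j \<noteq> 0)"
  then have w: "w = replicate (length w) 0"
    by (simp add: list_eq_iff_nth_eq)
  have special: "left_special (u_beta t) w"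
    and maximal: "\<And>a. \<not> left_special (u_beta t) (w @ [a])"
    using assms(3) unfolding maximal_left_special_def by auto
  show False
  proof (cases "length w \<le> t ! 0")
    case True
    then show False
      using left_special_zero_run_extension maximal w by metis
  next
    case False
    then show False
      using not_left_special_long_zero_run special w by (metis not_le)
  qed
qed

end
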